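(* Let $F/\mathbb{Q}_p$ be a finite extension with ring of integers $\mathcal{O}_F$, uniformizer $\pi$, and residue field $k_F$ of cardinality $q$. For $\lambda \in k_F^\times$ let $[\lambda] \in \mathcal{O}_F$ be the unique $(q-1)$-st root of unity lifting $\lambda$, and set $[0] = 0$. Let $I_0 = \{0\}$ and for $m \in \mathbb{N}$ let $I_m = \{ [\lambda_0] + \pi[\lambda_1] + \dots + \pi^{m-1}[\lambda_{m-1}] : (\lambda_0, \dots, \lambda_{m-1}) \in k_F^m \} \subset \mathcal{O}_F$. Then the set \[ \coprod_{m \geq 0} \left\{ \begin{pmatrix} \pi^m & 0 \\ \pi^{-m} \kappa & \pi^{-m} \end{pmatrix} : \kappa \in I_{2m} \right\} \ \sqcup\ \coprod_{m \geq 1} \left\{ \begin{pmatrix} 0 & -\pi^m \\ \pi^{-m} & -\pi^{-m+1}\kappa \end{pmatrix} : \kappa \in I_{2m-1} \right\} \] is a complete set of representatives (each coset represented exactly once) of the right cosets $\mathrm{SL}_2(\mathcal{O}_F) g$ of $\mathrm{SL}_2(\mathcal{O}_F)$ in $\mathrm{SL}_2(F)$. *)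

theory Defs
  imports Main
begin

text \<open>A p-adic field (finite extension of Q_p) is modelled as a field of characteristic 0
  with a normalized discrete valuation v (values on nonzero elements), complete for v,
  whose residue field is finite.\<close>

definition discrete_valuation :: "('a::field \<Rightarrow> int) \<Rightarrow> bool" where
  "discrete_valuation v \<longleftrightarrow>
     (\<forall>x y. x \<noteq> 0 \<longrightarrow> y \<noteq> 0 \<longrightarrow> v (x * y) = v x + v y) \<and>
     (\<forall>x y. x \<noteq> 0 \<longrightarrow> y \<noteq> 0 \<longrightarrow> x + y \<noteq> 0 \<longrightarrow> min (v x) (v y) \<le> v (x + y)) \<and>
     (\<exists>x. x \<noteq> 0 \<and> v x = 1)"

definition val_cauchy :: "('a::field \<Rightarrow> int) \<Rightarrow> (nat \<Rightarrow> 'a) \<Rightarrow> bool" where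
  "val_cauchy v s \<longleftrightarrow> (\<forall>N::int. \<exists>M. \<forall>m\<ge>M. \<forall>n\<ge>M. s m = s n \<or> N \<le> v (s m - s n))"

definition val_converges :: "('a::field \<Rightarrow> int) \<Rightarrow> (nat \<Rightarrow> 'a) \<Rightarrow> 'a \<Rightarrow> bool" where
  "val_converges v s L \<longleftrightarrow> (\<forall>N::int. \<exists>M. \<forall>n\<ge>M. s n = L \<or> N \<le> v (s n - L))"

definition val_complete :: "('a::field \<Rightarrow> int) \<Rightarrow> bool" where
  "val_complete v \<longleftrightarrow> (\<forall>s. val_cauchy v s \<longrightarrow> (\<exists>L. val_converges v s L))"

definition val_ring :: "('a::field \<Rightarrow> int) \<Rightarrow> 'a set" where
  "val_ring v = {x. x = 0 \<or> 0 \<le> v x}"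

text \<open>Reduction map O_F \<rightarrow> k_F = O_F / m_F; residue classes are represented as subsets of O_F.\<close>
definition residue :: "('a::field \<Rightarrow> int) \<Rightarrow> 'a \<Rightarrow> 'a set" where
  "residue v x = {y \<in> val_ring v. y = x \<or> 1 \<le> v (y - x)}"

definition residue_field :: "('a::field \<Rightarrow> int) \<Rightarrow> 'a set set" where
  "residue_field v = residue v ` val_ring v"

definition p_adic_field :: "('a::field_char_0 \<Rightarrow> int) \<Rightarrow> bool" where
  "p_adic_field v \<longleftrightarrow> discrete_valuation v \<and> val_complete v \<and> finite (residue_field v)"

definition uniformizer :: "('a::field \<Rightarrow> int) \<Rightarrow> 'a \<Rightarrow> bool" where
  "uniformizer v \<pi> \<longleftrightarrow> \<pi> \<noteq> 0 \<and> v \<pi> = 1"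

definition teich :: "('a::field \<Rightarrow> int) \<Rightarrow> 'a set \<Rightarrow> 'a" where
  "teich v l = (if l = residue v 0 then 0
     else (THE x. x \<in> val_ring v \<and> x ^ (card (residue_field v) - 1) = 1 \<and> residue v x = l))"

definition teich_digits :: "('a::field \<Rightarrow> int) \<Rightarrow> 'a \<Rightarrow> nat \<Rightarrow> 'a set" where
  "teich_digits v \<pi> m =
     {(\<Sum>i<m. \<pi> ^ i * teich v (lam i)) | lam. \<forall>i<m. lam i \<in> residue_field v}"

text \<open>2x2 matrices as tuples (a, b, c, d) = [[a, b], [c, d]].\<close>
type_synonym 'a mat2 = "'a \<times> 'a \<times> 'a \<times> 'a"

fun mat2_mult :: "'a::comm_ring_1 mat2 \<Rightarrow> 'a mat2 \<Rightarrow> 'a mat2" where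
  "mat2_mult (a, b, c, d) (a', b', c', d') =
     (a * a' + b * c', a * b' + b * d', c * a' + d * c', c * b' + d * d')"

fun mat2_det :: "'a::comm_ring_1 mat2 \<Rightarrow> 'a" where
  "mat2_det (a, b, c, d) = a * d - b * c"

definition SL2 :: "'a::comm_ring_1 set \<Rightarrow> 'a mat2 set" where
  "SL2 R = {(a, b, c, d). a \<in> R \<and> b \<in> R \<and> c \<in> R \<and> d \<in> R \<and> mat2_det (a, b, c, d) = 1}"

definition coset_index :: "('a::field \<Rightarrow> int) \<Rightarrow> 'a \<Rightarrow> ((nat \<times> 'a) + (nat \<times> 'a)) set" where
  "coset_index v \<pi> =
     Inl ` {(m, \<kappa>). \<kappa> \<in> teich_digits v \<pi> (2 * m)} \<union>
     Inr ` {(m, \<kappa>). 1 \<le> m \<and> \<kappa> \<in> teich_digits v \<pi> (2 * m - 1)}"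

fun coset_rep :: "'a::field \<Rightarrow> ((nat \<times> 'a) + (nat \<times> 'a)) \<Rightarrow> 'a mat2" where
  "coset_rep \<pi> (Inl (m, \<kappa>)) = (\<pi> ^ m, 0, inverse (\<pi> ^ m) * \<kappa>, inverse (\<pi> ^ m))"
| "coset_rep \<pi> (Inr (m, \<kappa>)) = (0, - (\<pi> ^ m), inverse (\<pi> ^ m), - (inverse (\<pi> ^ m) * \<pi> * \<kappa>))"

end

theory Submission
  imports Defs
begin

text \<open>
  Integral row operations bring every g in SL2(F) to a lower triangular matrix (t, 0, x, 1/t).
  Comparing v x with v t and -v t decides the type and the exponent m of its representative,
  and integrality of the quotient then prescribes kappa modulo a power \<pi>^n; since the
  Teichmueller expansions in I_n form a complete residue system modulo \<pi>^n, exactly one kappa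
  fits. For distinct representatives the quotient always has an entry of negative valuation.

  The Teichmueller lift of a unit x is the limit of x^(q^n): x^q = x modulo \<pi> because the unit
  group of the residue field has order q - 1, and raising to the q-th power turns a congruence
  modulo \<pi>^k into one modulo \<pi>^(k+1) because q lies in the maximal ideal.
\<close>

fun mat2_adj :: "'a::comm_ring_1 mat2 \<Rightarrow> 'a mat2" where
  "mat2_adj (a, b, c, d) = (d, - b, - c, a)"

lemma mat2_mult_assoc: "mat2_mult (mat2_mult A B) C = mat2_mult A (mat2_mult B C)"
  by (cases A rule: prod_cases4; cases B rule: prod_cases4; cases C rule: prod_cases4)
     (simp add: algebra_simps)

lemma mat2_det_mult: "mat2_det (mat2_mult A B) = mat2_det A * mat2_det B"
  by (cases A rule: prod_cases4; cases B rule: prod_cases4) (simp add: algebra_simps)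

lemma mat2_mult_one_left [simp]: "mat2_mult (1, 0, 0, 1) A = A"
  by (cases A rule: prod_cases4) simp

lemma mat2_mult_one_right [simp]: "mat2_mult A (1, 0, 0, 1) = A"
  by (cases A rule: prod_cases4) simp

lemma mat2_mult_adj_right: "mat2_det A = 1 \<Longrightarrow> mat2_mult A (mat2_adj A) = (1, 0, 0, 1)"
  by (cases A rule: prod_cases4) (simp add: algebra_simps)

lemma mat2_mult_adj_left: "mat2_det A = 1 \<Longrightarrow> mat2_mult (mat2_adj A) A = (1, 0, 0, 1)"
  by (cases A rule: prod_cases4) (simp add: algebra_simps)

lemma mat2_adj_mult: "mat2_adj (mat2_mult A B) = mat2_mult (mat2_adj B) (mat2_adj A)"
  by (cases A rule: prod_cases4; cases B rule: prod_cases4) (simp add: algebra_simps)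

lemma mat2_adj_adj [simp]: "mat2_adj (mat2_adj A) = A"
  by (cases A rule: prod_cases4) simp

lemma mat2_det_adj [simp]: "mat2_det (mat2_adj A) = mat2_det A"
  by (cases A rule: prod_cases4) (simp add: algebra_simps)

lemma mat2_factor_right: "mat2_det B = 1 \<Longrightarrow> A = mat2_mult (mat2_mult A (mat2_adj B)) B"
  by (simp add: mat2_mult_assoc mat2_mult_adj_left)

lemma SL2_iff: "(a, b, c, d) \<in> SL2 R \<longleftrightarrow> a \<in> R \<and> b \<in> R \<and> c \<in> R \<and> d \<in> R \<and> a * d - b * c = 1"
  by (simp add: SL2_def)

lemma SL2_det: "A \<in> SL2 R \<Longrightarrow> mat2_det A = 1"
  by (cases A rule: prod_cases4) (simp add: SL2_iff)

lemma SL2_UNIV_iff: "A \<in> SL2 UNIV \<longleftrightarrow> mat2_det A = 1"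
  by (cases A rule: prod_cases4) (simp add: SL2_iff)

context
  fixes R :: "'a::comm_ring_1 set"
  assumes add_closed: "\<And>x y. x \<in> R \<Longrightarrow> y \<in> R \<Longrightarrow> x + y \<in> R"
    and mult_closed: "\<And>x y. x \<in> R \<Longrightarrow> y \<in> R \<Longrightarrow> x * y \<in> R"
    and uminus_closed: "\<And>x. x \<in> R \<Longrightarrow> - x \<in> R"
begin

lemma SL2_mult_closed: "A \<in> SL2 R \<Longrightarrow> B \<in> SL2 R \<Longrightarrow> mat2_mult A B \<in> SL2 R"
proof (cases A rule: prod_cases4; cases B rule: prod_cases4)
  fix a b c d a' b' c' d'
  assume A: "A \<in> SL2 R" "A = (a, b, c, d)" and B: "B \<in> SL2 R" "B = (a', b', c', d')"
  have "mat2_det (mat2_mult A B) = 1" using SL2_det[OF A(1)] SL2_det[OF B(1)] by (simp add: mat2_det_mult)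
  then show ?thesis using A B by (simp add: SL2_iff add_closed mult_closed)
qed

lemma SL2_adj_closed: "A \<in> SL2 R \<Longrightarrow> mat2_adj A \<in> SL2 R"
  by (cases A rule: prod_cases4) (auto simp: SL2_iff algebra_simps uminus_closed)

lemma SL2_mult_adj_sym: "mat2_mult B (mat2_adj A) \<in> SL2 R \<Longrightarrow> mat2_mult A (mat2_adj B) \<in> SL2 R"
  using SL2_adj_closed[of "mat2_mult B (mat2_adj A)"] by (simp add: mat2_adj_mult)

lemma SL2_same_right_coset:
  assumes "h \<in> SL2 R" "h' \<in> SL2 R" "mat2_det A = 1" "mat2_mult h A = mat2_mult h' B"
  shows "mat2_mult B (mat2_adj A) \<in> SL2 R"
proof -
  have "B = mat2_mult (mat2_mult (mat2_adj h') h) A"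
    using assms(4) SL2_det[OF assms(2)]
    by (metis mat2_mult_assoc mat2_mult_adj_left mat2_mult_one_left)
  then have "mat2_mult B (mat2_adj A) = mat2_mult (mat2_adj h') h"
    using assms(3) by (simp add: mat2_mult_assoc mat2_mult_adj_right)
  then show ?thesis using assms(1,2) by (simp add: SL2_mult_closed SL2_adj_closed)
qed

end

text \<open>val_ideal v k is the k-th power of the maximal ideal, a fractional ideal for k < 0.\<close>
definition val_ideal :: "('a::field \<Rightarrow> int) \<Rightarrow> int \<Rightarrow> 'a set" where
  "val_ideal v k = {z. z = 0 \<or> k \<le> v z}"

locale discretely_valued_field =
  fixes v :: "'a::field \<Rightarrow> int"
  assumes discrete_valuation: "discrete_valuation v"
begin

abbreviation \<pp> :: "int \<Rightarrow> 'a set" where "\<pp> \<equiv> val_ideal v"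

lemma val_mult: "x \<noteq> 0 \<Longrightarrow> y \<noteq> 0 \<Longrightarrow> v (x * y) = v x + v y"
  using discrete_valuation unfolding discrete_valuation_def by blast

lemma val_add: "x \<noteq> 0 \<Longrightarrow> y \<noteq> 0 \<Longrightarrow> x + y \<noteq> 0 \<Longrightarrow> min (v x) (v y) \<le> v (x + y)"
  using discrete_valuation unfolding discrete_valuation_def by blast

lemma val_one [simp]: "v 1 = 0"
  using val_mult[of 1 1] by simp

lemma val_inverse: "x \<noteq> 0 \<Longrightarrow> v (inverse x) = - v x"
  using val_mult[of x "inverse x"] by simp

lemma val_uminus: "v (- x) = v x"
proof -
  have "v (-1) = 0" using val_mult[of "-1" "-1"] by simp
  then show ?thesis using val_mult[of "-1" x] by (cases "x = 0") simp_all
qed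

lemma val_power: "x \<noteq> 0 \<Longrightarrow> v (x ^ n) = int n * v x"
  by (induction n) (simp_all add: val_mult algebra_simps)

lemma val_prod: "(\<And>i. i \<in> A \<Longrightarrow> f i \<noteq> 0) \<Longrightarrow> v (prod f A) = (\<Sum>i\<in>A. v (f i))"
proof (induction A rule: infinite_finite_induct)
  case (insert x F) then show ?case by (simp add: val_mult prod_zero_iff)
qed simp_all

lemma val_ring_eq: "val_ring v = \<pp> 0"
  unfolding val_ring_def val_ideal_def by auto

lemma val_ideal_iff: "z \<noteq> 0 \<Longrightarrow> z \<in> \<pp> k \<longleftrightarrow> k \<le> v z"
  unfolding val_ideal_def by auto

lemma zero_in_val_ideal [simp]: "0 \<in> \<pp> k"
  by (simp add: val_ideal_def)

lemma one_in_val_ring: "1 \<in> \<pp> 0" and one_notin_max_ideal: "1 \<notin> \<pp> 1"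
  by (simp_all add: val_ideal_def)

lemma val_ring_unit_iff: "x \<in> \<pp> 0 \<and> x \<notin> \<pp> 1 \<longleftrightarrow> x \<noteq> 0 \<and> v x = 0"
  unfolding val_ideal_def by auto

lemma val_ideal_add: "x \<in> \<pp> k \<Longrightarrow> y \<in> \<pp> k \<Longrightarrow> x + y \<in> \<pp> k"
  unfolding val_ideal_def using val_add[of x y] by fastforce

lemma val_ideal_uminus_iff [simp]: "- x \<in> \<pp> k \<longleftrightarrow> x \<in> \<pp> k"
  by (simp add: val_ideal_def val_uminus)

lemma val_ideal_diff: "x \<in> \<pp> k \<Longrightarrow> y \<in> \<pp> k \<Longrightarrow> x - y \<in> \<pp> k"
  using val_ideal_add[of x k "- y"] by simp

lemma val_ideal_diff_commute: "x - y \<in> \<pp> k \<longleftrightarrow> y - x \<in> \<pp> k"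
  using val_ideal_uminus_iff[of "x - y" k] by simp

lemma val_ideal_mono: "j \<le> k \<Longrightarrow> x \<in> \<pp> k \<Longrightarrow> x \<in> \<pp> j"
  unfolding val_ideal_def by auto

lemma val_ideal_mult: "x \<in> \<pp> j \<Longrightarrow> y \<in> \<pp> k \<Longrightarrow> x * y \<in> \<pp> (j + k)"
  unfolding val_ideal_def by (cases "x = 0"; cases "y = 0") (auto simp: val_mult)

lemma val_ideal_mult_iff: "c \<noteq> 0 \<Longrightarrow> c * z \<in> \<pp> k \<longleftrightarrow> z \<in> \<pp> (k - v c)"
  unfolding val_ideal_def by (cases "z = 0") (auto simp: val_mult)

lemma val_ideal_scale: "c \<noteq> 0 \<Longrightarrow> z \<in> \<pp> j \<Longrightarrow> k \<le> j + v c \<Longrightarrow> c * z \<in> \<pp> k"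
  using val_ideal_mult_iff[of c z k] val_ideal_mono[of "k - v c" j z] by simp

lemma val_ideal_Inter: "(\<And>k. z \<in> \<pp> k) \<Longrightarrow> z = 0"
  using val_ideal_iff[of z "v z + 1"] by auto

lemma val_ideal_sum: "(\<And>i. i \<in> A \<Longrightarrow> f i \<in> \<pp> k) \<Longrightarrow> sum f A \<in> \<pp> k"
proof (induction A rule: infinite_finite_induct)
  case (insert x F) then show ?case by (simp add: val_ideal_add)
qed simp_all

lemma val_ring_prod: "(\<And>i. i \<in> A \<Longrightarrow> f i \<in> \<pp> 0) \<Longrightarrow> prod f A \<in> \<pp> 0"
proof (induction A rule: infinite_finite_induct)
  case (insert x F) then show ?case using val_ideal_mult[of "f x" 0 "prod f F" 0] by simp
qed (simp_all add: one_in_val_ring)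

lemma val_ring_power: "x \<in> \<pp> 0 \<Longrightarrow> x ^ n \<in> \<pp> 0"
  using val_ring_prod[of "{..<n}" "\<lambda>_. x"] by simp

lemma prod_diff_in_val_ideal:
  "(\<And>i. i \<in> A \<Longrightarrow> f i \<in> \<pp> 0 \<and> g i \<in> \<pp> 0 \<and> f i - g i \<in> \<pp> k)
   \<Longrightarrow> prod f A - prod g A \<in> \<pp> k"
proof (induction A rule: infinite_finite_induct)
  case (insert x F)
  have "prod f (insert x F) - prod g (insert x F) =
     f x * (prod f F - prod g F) + (f x - g x) * prod g F"
    using insert.hyps by (simp add: algebra_simps)
  moreover have "f x * (prod f F - prod g F) \<in> \<pp> k"
    using val_ideal_mult[of "f x" 0 _ k] insert by simp
  moreover have "(f x - g x) * prod g F \<in> \<pp> k"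
    using val_ideal_mult[of _ k "prod g F" 0] insert val_ring_prod[of F g] by simp
  ultimately show ?case using val_ideal_add by simp
qed simp_all

lemma power_diff_in_val_ideal:
  "x \<in> \<pp> 0 \<Longrightarrow> y \<in> \<pp> 0 \<Longrightarrow> x - y \<in> \<pp> k \<Longrightarrow> x ^ n - y ^ n \<in> \<pp> k"
  using prod_diff_in_val_ideal[of "{..<n}" "\<lambda>_. x" "\<lambda>_. y"] by simp

lemma val_ring_closed:
  "x \<in> val_ring v \<Longrightarrow> y \<in> val_ring v \<Longrightarrow> x + y \<in> val_ring v"
  "x \<in> val_ring v \<Longrightarrow> y \<in> val_ring v \<Longrightarrow> x * y \<in> val_ring v"
  "x \<in> val_ring v \<Longrightarrow> - x \<in> val_ring v"
  unfolding val_ring_eq using val_ideal_add val_ideal_mult[of x 0 y 0] by simp_all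

lemma SL2_val_ring_mult:
  "A \<in> SL2 (val_ring v) \<Longrightarrow> B \<in> SL2 (val_ring v) \<Longrightarrow> mat2_mult A B \<in> SL2 (val_ring v)"
  using SL2_mult_closed[of "val_ring v"] val_ring_closed by blast

lemma SL2_val_ring_mult_adj_sym:
  "mat2_mult B (mat2_adj A) \<in> SL2 (val_ring v) \<Longrightarrow> mat2_mult A (mat2_adj B) \<in> SL2 (val_ring v)"
  using SL2_mult_adj_sym[of "val_ring v"] val_ring_closed by blast

lemma SL2_val_ring_same_right_coset:
  "h \<in> SL2 (val_ring v) \<Longrightarrow> h' \<in> SL2 (val_ring v) \<Longrightarrow> mat2_det A = 1 \<Longrightarrow>
   mat2_mult h A = mat2_mult h' B \<Longrightarrow> mat2_mult B (mat2_adj A) \<in> SL2 (val_ring v)"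
  using SL2_same_right_coset[of "val_ring v"] val_ring_closed by blast

lemma SL2_val_ring_iff:
  "(a, b, c, d) \<in> SL2 (val_ring v) \<longleftrightarrow> a \<in> \<pp> 0 \<and> b \<in> \<pp> 0 \<and> c \<in> \<pp> 0 \<and> d \<in> \<pp> 0 \<and> a * d - b * c = 1"
  by (simp add: SL2_iff val_ring_eq)

lemma SL2_val_ring_intro:
  "mat2_det A = 1 \<Longrightarrow> A = (a, b, c, d) \<Longrightarrow> a \<in> \<pp> 0 \<Longrightarrow> b \<in> \<pp> 0 \<Longrightarrow> c \<in> \<pp> 0 \<Longrightarrow> d \<in> \<pp> 0
   \<Longrightarrow> A \<in> SL2 (val_ring v)"
  by (simp add: SL2_val_ring_iff)

end

locale local_field = discretely_valued_field +
  assumes finite_residue_field: "finite (residue_field v)"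
    and complete: "val_complete v"
begin

abbreviation q :: nat where "q \<equiv> card (residue_field v)"

lemma residue_eq: "residue v x = {y \<in> \<pp> 0. y - x \<in> \<pp> 1}"
  unfolding residue_def val_ring_eq val_ideal_def by auto

lemma residue_eq_iff:
  assumes "x \<in> \<pp> 0" "y \<in> \<pp> 0"
  shows "residue v x = residue v y \<longleftrightarrow> x - y \<in> \<pp> 1"
proof
  assume "residue v x = residue v y"
  moreover have "x \<in> residue v x" using assms(1) by (simp add: residue_eq)
  ultimately show "x - y \<in> \<pp> 1" by (simp add: residue_eq)
next
  assume xy: "x - y \<in> \<pp> 1"
  have "z - x \<in> \<pp> 1 \<longleftrightarrow> z - y \<in> \<pp> 1" for z
  proof
    assume "z - x \<in> \<pp> 1"
    from val_ideal_add[OF this xy] show "z - y \<in> \<pp> 1" by simp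
  next
    assume "z - y \<in> \<pp> 1"
    from val_ideal_diff[OF this xy] show "z - x \<in> \<pp> 1" by simp
  qed
  then show "residue v x = residue v y" by (simp add: residue_eq)
qed

lemma residue_field_iff: "l \<in> residue_field v \<longleftrightarrow> (\<exists>x\<in>\<pp> 0. l = residue v x)"
  by (auto simp: residue_field_def val_ring_eq)

lemma residue_zero_in_residue_field: "residue v 0 \<in> residue_field v"
  using residue_field_iff by auto

lemma card_residue_field_pos: "q > 0"
  using residue_zero_in_residue_field finite_residue_field card_gt_0_iff by blast

definition residue_rep :: "'a set \<Rightarrow> 'a" where
  "residue_rep l = (SOME x. x \<in> \<pp> 0 \<and> residue v x = l)"

lemma residue_rep_lifts: "l \<in> residue_field v \<Longrightarrow> residue_rep l \<in> \<pp> 0 \<and> residue v (residue_rep l) = l"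
  unfolding residue_rep_def residue_field_iff by (rule someI_ex) auto

lemma residue_permutation:
  assumes S: "S \<subseteq> residue_field v"
    and maps_to: "\<And>l. l \<in> S \<Longrightarrow> \<phi> (residue_rep l) \<in> \<pp> 0 \<and> residue v (\<phi> (residue_rep l)) \<in> S"
    and cancel: "\<And>x y. x \<in> \<pp> 0 \<Longrightarrow> y \<in> \<pp> 0 \<Longrightarrow> \<phi> x - \<phi> y \<in> \<pp> 1 \<Longrightarrow> x - y \<in> \<pp> 1"
  shows "bij_betw (\<lambda>l. residue v (\<phi> (residue_rep l))) S S"
proof -
  let ?f = "\<lambda>l. residue v (\<phi> (residue_rep l))"
  have "inj_on ?f S"
  proof
    fix l l' assume l: "l \<in> S" "l' \<in> S" "?f l = ?f l'"
    have r: "residue_rep l \<in> \<pp> 0" "residue_rep l' \<in> \<pp> 0"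
      "residue v (residue_rep l) = l" "residue v (residue_rep l') = l'"
      using residue_rep_lifts S l(1,2) by auto
    have "\<phi> (residue_rep l) - \<phi> (residue_rep l') \<in> \<pp> 1"
      using residue_eq_iff maps_to l by simp
    then have "residue_rep l - residue_rep l' \<in> \<pp> 1"
      using cancel r(1,2) by simp
    then show "l = l'" using residue_eq_iff[OF r(1,2)] r(3,4) by simp
  qed
  moreover have "?f ` S \<subseteq> S" using maps_to by blast
  ultimately show ?thesis
    using endo_inj_surj[OF finite_subset[OF S finite_residue_field]] by (simp add: bij_betw_def)
qed

text \<open>The sum of representatives of all residue classes is invariant under translation by 1.\<close>
lemma card_residue_field_in_max_ideal: "of_nat q \<in> \<pp> 1"
proof -
  let ?f = "\<lambda>l. residue v (residue_rep l + 1)"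
  have maps_to: "residue_rep l + 1 \<in> \<pp> 0 \<and> ?f l \<in> residue_field v"
    if "l \<in> residue_field v" for l
  proof -
    have "residue_rep l + 1 \<in> \<pp> 0"
      using residue_rep_lifts[OF that] val_ideal_add one_in_val_ring by blast
    then show ?thesis using residue_field_iff by blast
  qed
  have bij: "bij_betw ?f (residue_field v) (residue_field v)"
    by (rule residue_permutation) (use maps_to in simp_all)
  have "residue_rep (?f l) - (residue_rep l + 1) \<in> \<pp> 1" if "l \<in> residue_field v" for l
    using maps_to[OF that] residue_rep_lifts residue_eq_iff by blast
  then have "(\<Sum>l\<in>residue_field v. residue_rep (?f l) - (residue_rep l + 1)) \<in> \<pp> 1"
    by (rule val_ideal_sum)
  moreover have "(\<Sum>l\<in>residue_field v. residue_rep (?f l)) = (\<Sum>l\<in>residue_field v. residue_rep l)"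
    using sum.reindex_bij_betw[OF bij] .
  ultimately show ?thesis by (simp add: sum_subtractf sum.distrib)
qed

text \<open>Multiplication by a permutes the nonzero residue classes.\<close>
lemma unit_power_card_minus_one:
  assumes a: "a \<noteq> 0" "v a = 0"
  shows "a ^ (q - 1) - 1 \<in> \<pp> 1"
proof -
  define S where "S = residue_field v - {residue v 0}"
  let ?f = "\<lambda>l. residue v (a * residue_rep l)"
  have finite_S: "finite S" using finite_residue_field by (simp add: S_def)
  have unit_iff: "z \<in> \<pp> 0 \<and> residue v z \<noteq> residue v 0 \<longleftrightarrow> z \<noteq> 0 \<and> v z = 0" for z
    using residue_eq_iff[of z 0] by (cases "z = 0") (auto simp: val_ideal_iff)
  have rep_unit: "residue_rep l \<noteq> 0 \<and> v (residue_rep l) = 0" if "l \<in> S" for l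
    using residue_rep_lifts[of l] unit_iff that by (auto simp: S_def)
  have maps_to: "a * residue_rep l \<in> \<pp> 0 \<and> ?f l \<in> S" if "l \<in> S" for l
  proof -
    have "a * residue_rep l \<in> \<pp> 0" "residue v (a * residue_rep l) \<noteq> residue v 0"
      using unit_iff[of "a * residue_rep l"] rep_unit[OF that] a by (auto simp: val_mult)
    then show ?thesis using residue_field_iff by (auto simp: S_def)
  qed
  have bij: "bij_betw ?f S S"
  proof (rule residue_permutation)
    fix x y assume "a * x - a * y \<in> \<pp> 1"
    then show "x - y \<in> \<pp> 1"
      using val_ideal_mult_iff[OF a(1), of "x - y"] a(2) by (simp add: right_diff_distrib)
  qed (use maps_to in \<open>auto simp: S_def\<close>)
  have "prod (\<lambda>l. residue_rep (?f l)) S - prod (\<lambda>l. a * residue_rep l) S \<in> \<pp> 1"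
  proof (rule prod_diff_in_val_ideal)
    fix l assume "l \<in> S"
    then have "?f l \<in> residue_field v" "a * residue_rep l \<in> \<pp> 0"
      using maps_to by (auto simp: S_def)
    then show "residue_rep (?f l) \<in> \<pp> 0 \<and> a * residue_rep l \<in> \<pp> 0 \<and>
        residue_rep (?f l) - a * residue_rep l \<in> \<pp> 1"
      using residue_rep_lifts residue_eq_iff by blast
  qed
  moreover have "prod (\<lambda>l. residue_rep (?f l)) S = prod residue_rep S"
    using prod.reindex_bij_betw[OF bij] .
  moreover have "card S = q - 1"
    unfolding S_def using residue_zero_in_residue_field finite_residue_field by simp
  then have "prod (\<lambda>l. a * residue_rep l) S = a ^ (q - 1) * prod residue_rep S"
    by (simp add: prod.distrib)
  ultimately have "prod residue_rep S * (1 - a ^ (q - 1)) \<in> \<pp> 1"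
    by (simp add: algebra_simps)
  moreover have "prod residue_rep S \<noteq> 0" "v (prod residue_rep S) = 0"
    using rep_unit finite_S by (simp_all add: val_prod)
  ultimately show ?thesis
    using val_ideal_mult_iff val_ideal_diff_commute by simp
qed

text \<open>x^q - y^q = (x - y) * S, where S is a sum of q terms congruent to x^(q-1), and q lies in the
  maximal ideal.\<close>
lemma power_card_diff:
  assumes x: "x \<in> \<pp> 0" and y: "y \<in> \<pp> 0" and xy: "x - y \<in> \<pp> k" and k: "1 \<le> k"
  shows "x ^ q - y ^ q \<in> \<pp> (k + 1)"
proof -
  define S where "S = (\<Sum>i<q. y ^ (q - Suc i) * x ^ i)"
  have yx: "y - x \<in> \<pp> 1" using xy k val_ideal_mono val_ideal_diff_commute by blast
  have "(\<Sum>i<q. y ^ (q - Suc i) * x ^ i - x ^ (q - 1)) \<in> \<pp> 1"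
  proof (rule val_ideal_sum)
    fix i assume i: "i \<in> {..<q}"
    then have "x ^ (q - Suc i) * x ^ i = x ^ (q - 1)" by (simp flip: power_add)
    then have "y ^ (q - Suc i) * x ^ i - x ^ (q - 1) = (y ^ (q - Suc i) - x ^ (q - Suc i)) * x ^ i"
      by (simp add: algebra_simps)
    then show "y ^ (q - Suc i) * x ^ i - x ^ (q - 1) \<in> \<pp> 1"
      using val_ideal_mult[OF power_diff_in_val_ideal[OF y x yx] val_ring_power[OF x]] by simp
  qed
  then have "S - of_nat q * x ^ (q - 1) \<in> \<pp> 1" by (simp add: S_def sum_subtractf)
  moreover have "of_nat q * x ^ (q - 1) \<in> \<pp> 1"
    using val_ideal_mult[OF card_residue_field_in_max_ideal val_ring_power[OF x]] by simp
  ultimately have "S \<in> \<pp> 1" using val_ideal_add by fastforce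
  moreover have "x ^ q - y ^ q = (x - y) * S" unfolding S_def by (rule power_diff_sumr2)
  ultimately show ?thesis using val_ideal_mult[OF xy] by simp
qed

lemma val_limit_exists:
  assumes step: "\<And>n. s (Suc n) - s n \<in> \<pp> (int n + 1)"
  shows "\<exists>L. \<forall>n. s n - L \<in> \<pp> (int n + 1)"
proof -
  have chain: "s m - s n \<in> \<pp> (int n + 1)" if "n \<le> m" for m n
    using that
  proof (induction m rule: dec_induct)
    case (step m)
    have "s (Suc m) - s m \<in> \<pp> (int n + 1)"
      using val_ideal_mono[OF _ assms[of m]] \<open>n \<le> m\<close> by simp
    from val_ideal_add[OF this step.IH] show ?case by simp
  qed simp
  have conv_iff: "a = b \<or> N \<le> v (a - b) \<longleftrightarrow> a - b \<in> \<pp> N" for a b N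
    by (simp add: val_ideal_def)
  have "val_cauchy v s"
    unfolding val_cauchy_def conv_iff
  proof (intro allI exI impI)
    fix N :: int and m n assume mn: "nat N \<le> m" "nat N \<le> n"
    show "s m - s n \<in> \<pp> N"
    proof (cases "n \<le> m")
      case True
      then show ?thesis using chain val_ideal_mono[of N "int n + 1"] mn by simp
    next
      case False
      then have "s n - s m \<in> \<pp> (int m + 1)" using chain by simp
      then show ?thesis using val_ideal_mono[of N "int m + 1"] mn val_ideal_diff_commute by simp
    qed
  qed
  then obtain L where "val_converges v s L" using complete val_complete_def by blast
  then have conv: "\<exists>M. \<forall>m\<ge>M. s m - L \<in> \<pp> N" for N
    unfolding val_converges_def conv_iff by blast
  have "s n - L \<in> \<pp> (int n + 1)" for n
  proof -
    obtain M where M: "\<forall>m\<ge>M. s m - L \<in> \<pp> (int n + 1)" using conv by blast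
    have "s (max M n) - s n \<in> \<pp> (int n + 1)" using chain by simp
    from val_ideal_diff[OF M[rule_format, of "max M n"] this] show ?thesis by simp
  qed
  then show ?thesis by blast
qed

lemma teichmueller_lift_exists:
  assumes x: "x \<in> \<pp> 0" "x \<notin> \<pp> 1"
  shows "\<exists>L\<in>\<pp> 0. L ^ q = L \<and> L - x \<in> \<pp> 1"
proof -
  define s where "s n = x ^ (q ^ n)" for n
  have s_in: "s n \<in> \<pp> 0" for n
    unfolding s_def using val_ring_power[OF x(1)] .
  have s_Suc: "s (Suc n) = s n ^ q" for n
    unfolding s_def power_Suc2 power_mult ..
  have "s (Suc n) - s n \<in> \<pp> (int n + 1)" for n
  proof (induction n)
    case 0
    have "x \<noteq> 0" "v x = 0" using x val_ring_unit_iff by blast+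
    then have "x * (x ^ (q - 1) - 1) \<in> \<pp> 1"
      using val_ideal_mult[OF x(1) unit_power_card_minus_one] by simp
    moreover have "x * (x ^ (q - 1) - 1) = x ^ q - x"
      using card_residue_field_pos by (simp add: algebra_simps flip: power_Suc)
    ultimately show ?case by (simp add: s_def)
  next
    case (Suc n)
    show ?case using power_card_diff[OF s_in s_in Suc] s_Suc by (simp add: add.commute)
  qed
  then obtain L where L: "\<And>n. s n - L \<in> \<pp> (int n + 1)"
    using val_limit_exists by blast
  have Lx: "L - x \<in> \<pp> 1" using L[of 0] val_ideal_diff_commute by (simp add: s_def)
  have L_in: "L \<in> \<pp> 0" using val_ideal_add[OF val_ideal_mono[OF _ Lx] x(1)] by simp
  have close: "L ^ q - L \<in> \<pp> (int n + 1)" for n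
  proof -
    have "s n ^ q - L ^ q \<in> \<pp> (int n + 1)"
      using power_diff_in_val_ideal[OF s_in L_in L] .
    moreover have "s (Suc n) - L \<in> \<pp> (int n + 1)"
      using val_ideal_mono[OF _ L[of "Suc n"]] by simp
    ultimately have "(s (Suc n) - L) - (s n ^ q - L ^ q) \<in> \<pp> (int n + 1)"
      using val_ideal_diff by blast
    then show ?thesis by (simp add: s_Suc)
  qed
  have "L ^ q - L \<in> \<pp> k" for k
    using val_ideal_mono[OF _ close[of "nat k"]] by simp
  then have "L ^ q = L" using val_ideal_Inter[of "L ^ q - L"] by simp
  then show ?thesis using L_in Lx by blast
qed

lemma teichmueller_lift_unique:
  assumes y: "y \<in> \<pp> 0" "y ^ q = y" and z: "z \<in> \<pp> 0" "z ^ q = z" and yz: "y - z \<in> \<pp> 1"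
  shows "y = z"
proof -
  have close: "y - z \<in> \<pp> (int n + 1)" for n
  proof (induction n)
    case (Suc n)
    then show ?case using power_card_diff[OF y(1) z(1) Suc] y(2) z(2) by (simp add: add.commute)
  qed (use yz in simp)
  have "y - z \<in> \<pp> k" for k
    using val_ideal_mono[OF _ close[of "nat k"]] by simp
  then show ?thesis using val_ideal_Inter[of "y - z"] by simp
qed

lemma power_card_eq_iff:
  fixes x :: 'a
  assumes "x \<noteq> 0"
  shows "x ^ q = x \<longleftrightarrow> x ^ (q - 1) = 1"
proof -
  have "x ^ q = x * x ^ (q - 1)" using card_residue_field_pos by (simp flip: power_Suc)
  then show ?thesis using mult_left_cancel[OF assms, of "x ^ (q - 1)" 1] by simp
qed

lemma teich_lifts:
  assumes l: "l \<in> residue_field v"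
  shows "teich v l \<in> \<pp> 0 \<and> residue v (teich v l) = l"
proof (cases "l = residue v 0")
  case False
  obtain x where x: "x \<in> \<pp> 0" "l = residue v x" using l residue_field_iff by blast
  have "x \<notin> \<pp> 1" using False x residue_eq_iff[of x 0] by auto
  then obtain L where L: "L \<in> \<pp> 0" "L ^ q = L" "L - x \<in> \<pp> 1"
    using teichmueller_lift_exists[OF x(1)] by blast
  have "L \<noteq> 0" using \<open>x \<notin> \<pp> 1\<close> L(3) by auto
  have L_res: "residue v L = l" using residue_eq_iff[OF L(1) x(1)] L(3) x(2) by simp
  have "\<exists>!y. y \<in> val_ring v \<and> y ^ (q - 1) = 1 \<and> residue v y = l"
  proof
    show "L \<in> val_ring v \<and> L ^ (q - 1) = 1 \<and> residue v L = l"
      using L(1,2) L_res power_card_eq_iff[OF \<open>L \<noteq> 0\<close>] by (simp add: val_ring_eq)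
  next
    fix y assume "y \<in> val_ring v \<and> y ^ (q - 1) = 1 \<and> residue v y = l"
    moreover have "y \<noteq> 0" using calculation False by auto
    ultimately have y: "y \<in> \<pp> 0" "y ^ q = y" "residue v y = l"
      using power_card_eq_iff[of y] by (auto simp: val_ring_eq)
    then show "y = L"
      using teichmueller_lift_unique[OF y(1,2) L(1,2)] residue_eq_iff[OF y(1) L(1)] L_res by simp
  qed
  then have "teich v l \<in> val_ring v \<and> residue v (teich v l) = l"
    unfolding teich_def using False theI'[of "\<lambda>y. y \<in> val_ring v \<and> y ^ (q - 1) = 1 \<and> residue v y = l"]
    by simp
  then show ?thesis by (simp add: val_ring_eq)
qed (simp add: teich_def)

lemma teich_congruent_imp_eq:
  assumes "l \<in> residue_field v" "l' \<in> residue_field v" "teich v l - teich v l' \<in> \<pp> 1"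
  shows "teich v l = teich v l'"
  using residue_eq_iff[of "teich v l" "teich v l'"] teich_lifts[OF assms(1)] teich_lifts[OF assms(2)]
    assms(3)
  by simp

end

locale local_field_uniformizer = local_field +
  fixes \<pi> :: 'a
  assumes uniformizer: "uniformizer v \<pi>"
begin

lemma pi_nonzero: "\<pi> \<noteq> 0" and val_pi: "v \<pi> = 1"
  using uniformizer by (simp_all add: uniformizer_def)

lemma pi_in_max_ideal: "\<pi> \<in> \<pp> 1"
  using pi_nonzero val_pi val_ideal_iff by simp

lemma val_pi_power [simp]: "v (\<pi> ^ m) = int m"
  using val_power[OF pi_nonzero] val_pi by simp

lemma val_inverse_pi_power [simp]: "v (inverse (\<pi> ^ m)) = - int m"
  using val_inverse[of "\<pi> ^ m"] pi_nonzero by simp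

lemma teich_digits_0: "teich_digits v \<pi> 0 = {0}"
  unfolding teich_digits_def by auto

lemma teich_digits_Suc:
  "teich_digits v \<pi> (Suc m) = {teich v l + \<pi> * k | l k. l \<in> residue_field v \<and> k \<in> teich_digits v \<pi> m}"
proof (intro equalityI subsetI)
  fix x assume "x \<in> teich_digits v \<pi> (Suc m)"
  then obtain lam where x: "x = (\<Sum>i<Suc m. \<pi> ^ i * teich v (lam i))"
    and lam: "\<forall>i<Suc m. lam i \<in> residue_field v"
    unfolding teich_digits_def by blast
  have "x = teich v (lam 0) + \<pi> * (\<Sum>i<m. \<pi> ^ i * teich v (lam (Suc i)))"
    unfolding x sum.lessThan_Suc_shift by (simp add: sum_distrib_left mult.assoc)
  moreover have "(\<Sum>i<m. \<pi> ^ i * teich v (lam (Suc i))) \<in> teich_digits v \<pi> m"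
    unfolding teich_digits_def using lam by auto
  ultimately show "x \<in> {teich v l + \<pi> * k | l k. l \<in> residue_field v \<and> k \<in> teich_digits v \<pi> m}"
    using lam by blast
next
  fix x assume "x \<in> {teich v l + \<pi> * k | l k. l \<in> residue_field v \<and> k \<in> teich_digits v \<pi> m}"
  then obtain l k where x: "x = teich v l + \<pi> * k" and l: "l \<in> residue_field v"
    and k: "k \<in> teich_digits v \<pi> m" by blast
  obtain lam where k': "k = (\<Sum>i<m. \<pi> ^ i * teich v (lam i))"
    and lam: "\<forall>i<m. lam i \<in> residue_field v"
    using k unfolding teich_digits_def by blast
  define lam' where "lam' i = (if i = 0 then l else lam (i - 1))" for i
  have "x = (\<Sum>i<Suc m. \<pi> ^ i * teich v (lam' i))"
    unfolding x k' sum.lessThan_Suc_shift by (simp add: sum_distrib_left mult.assoc lam'_def)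
  moreover have "\<forall>i<Suc m. lam' i \<in> residue_field v" using lam l unfolding lam'_def by auto
  ultimately show "x \<in> teich_digits v \<pi> (Suc m)" unfolding teich_digits_def by blast
qed

lemma zero_in_teich_digits: "0 \<in> teich_digits v \<pi> m"
  using residue_zero_in_residue_field unfolding teich_digits_def by (force simp: teich_def)

lemma teich_digits_in_val_ring: "k \<in> teich_digits v \<pi> m \<Longrightarrow> k \<in> \<pp> 0"
proof (induction m arbitrary: k)
  case (Suc m)
  then obtain l a where k: "k = teich v l + \<pi> * a" "l \<in> residue_field v" "a \<in> teich_digits v \<pi> m"
    using teich_digits_Suc by blast
  have "\<pi> * a \<in> \<pp> 0"
    using val_ideal_mono[OF _ val_ideal_mult[OF pi_in_max_ideal Suc.IH[OF k(3)]]] by simp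
  then show ?case using val_ideal_add teich_lifts k(1,2) by blast
qed (simp add: teich_digits_0)

lemma teich_digits_congruent_imp_eq:
  "k \<in> teich_digits v \<pi> m \<Longrightarrow> k' \<in> teich_digits v \<pi> m \<Longrightarrow> k - k' \<in> \<pp> (int m) \<Longrightarrow> k = k'"
proof (induction m arbitrary: k k')
  case (Suc m)
  obtain l a where k: "k = teich v l + \<pi> * a" "l \<in> residue_field v" "a \<in> teich_digits v \<pi> m"
    using teich_digits_Suc Suc.prems(1) by blast
  obtain l' a' where k': "k' = teich v l' + \<pi> * a'" "l' \<in> residue_field v" "a' \<in> teich_digits v \<pi> m"
    using teich_digits_Suc Suc.prems(2) by blast
  have diff: "k - k' = (teich v l - teich v l') + \<pi> * (a - a')"
    using k k' by (simp add: algebra_simps)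
  have "\<pi> * (a - a') \<in> \<pp> 1"
    using val_ideal_mult[OF pi_in_max_ideal val_ideal_diff[OF teich_digits_in_val_ring teich_digits_in_val_ring]]
      k(3) k'(3) by simp
  moreover have "k - k' \<in> \<pp> 1" using Suc.prems(3) val_ideal_mono[of 1 "int (Suc m)"] by simp
  ultimately have "teich v l - teich v l' \<in> \<pp> 1" using val_ideal_diff diff by fastforce
  then have same_digit: "teich v l = teich v l'" using teich_congruent_imp_eq k(2) k'(2) by blast
  then have "\<pi> * (a - a') \<in> \<pp> (int (Suc m))" using diff Suc.prems(3) by simp
  then have "a - a' \<in> \<pp> (int m)" using val_ideal_mult_iff[OF pi_nonzero] val_pi by simp
  then have "a = a'" using Suc.IH k(3) k'(3) by blast
  then show ?case using same_digit k k' by simp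
qed (simp add: teich_digits_0)

lemma teich_digits_approx: "x \<in> \<pp> 0 \<Longrightarrow> \<exists>k\<in>teich_digits v \<pi> m. x - k \<in> \<pp> (int m)"
proof (induction m arbitrary: x)
  case (Suc m)
  define t where "t = teich v (residue v x)"
  have l: "residue v x \<in> residue_field v" using Suc.prems residue_field_iff by blast
  then have t: "t \<in> \<pp> 0" "residue v t = residue v x" using teich_lifts t_def by auto
  then have "x - t \<in> \<pp> 1" using residue_eq_iff[OF Suc.prems t(1)] by simp
  moreover define y where "y = (x - t) / \<pi>"
  moreover have "\<pi> * y = x - t" using pi_nonzero by (simp add: y_def)
  ultimately have "y \<in> \<pp> 0"
    using val_ideal_mult_iff[OF pi_nonzero, of y 1] val_pi by simp
  then obtain a where a: "a \<in> teich_digits v \<pi> m" "y - a \<in> \<pp> (int m)"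
    using Suc.IH by blast
  have "x - (t + \<pi> * a) = \<pi> * (y - a)"
    using \<open>\<pi> * y = x - t\<close> by (simp add: algebra_simps)
  moreover have "\<pi> * (y - a) \<in> \<pp> (int (Suc m))"
    using val_ideal_mult[OF pi_in_max_ideal a(2)] by (simp add: add.commute)
  moreover have "t + \<pi> * a \<in> teich_digits v \<pi> (Suc m)"
    unfolding teich_digits_Suc using l a t_def by blast
  ultimately show ?case by metis
qed (simp add: teich_digits_0)

lemma det_coset_rep: "mat2_det (coset_rep \<pi> i) = 1"
  by (cases i) (auto simp: pi_nonzero)

lemma det_lower_triangular_mult_adj:
  "t \<noteq> 0 \<Longrightarrow> mat2_det (mat2_mult (t, 0, x, inverse t) (mat2_adj (coset_rep \<pi> i))) = 1"
  by (simp add: mat2_det_mult det_coset_rep)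

text \<open>Integral row operations clear the upper right entry against the lower right one,
  after swapping the rows if the lower right entry has the larger valuation.\<close>
lemma lower_triangular_reduction:
  assumes g: "g \<in> SL2 UNIV"
  shows "\<exists>t x h. t \<noteq> 0 \<and> h \<in> SL2 (val_ring v) \<and> g = mat2_mult h (t, 0, x, inverse t)"
proof (cases g rule: prod_cases4)
  case (fields a b c d)
  have det: "a * d - b * c = 1" using g fields by (simp add: SL2_iff)
  show ?thesis
  proof (cases "d \<noteq> 0 \<and> (b = 0 \<or> v d \<le> v b)")
    case True
    have "b / d \<in> \<pp> 0"
      using True by (cases "b = 0") (simp_all add: divide_inverse val_ideal_iff val_mult val_inverse)
    then have "(1, b / d, 0, 1) \<in> SL2 (val_ring v)" by (simp add: SL2_val_ring_iff one_in_val_ring)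
    moreover have "g = mat2_mult (1, b / d, 0, 1) (inverse d, 0, c, inverse (inverse d))"
      using True det fields by (simp add: field_simps)
    ultimately show ?thesis using True by (metis inverse_nonzero_iff_nonzero)
  next
    case False
    then have b: "b \<noteq> 0" and "d = 0 \<or> v b < v d" using det by auto
    then have "d / b \<in> \<pp> 0"
      by (cases "d = 0") (simp_all add: divide_inverse val_ideal_iff val_mult val_inverse)
    then have "(0, 1, -1, d / b) \<in> SL2 (val_ring v)" by (simp add: SL2_val_ring_iff one_in_val_ring)
    moreover have "g = mat2_mult (0, 1, -1, d / b) (inverse b, 0, a, inverse (inverse b))"
      using b det fields by (simp add: field_simps)
    ultimately show ?thesis using b by (metis inverse_nonzero_iff_nonzero)
  qed
qed

lemmas val_simps = val_mult val_inverse val_uminus pi_nonzero val_pi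

lemma lower_triangular_coset_Inl:
  assumes t: "t \<noteq> 0" "0 \<le> v t" and x: "x \<in> \<pp> (- v t)"
  shows "\<exists>i\<in>coset_index v \<pi>.
    mat2_mult (t, 0, x, inverse t) (mat2_adj (coset_rep \<pi> i)) \<in> SL2 (val_ring v)"
proof -
  define m where "m = nat (v t)"
  have m: "int m = v t" using t m_def by simp
  have "t * x \<in> \<pp> 0" using val_ideal_scale[OF t(1) x] by simp
  then obtain k where k: "k \<in> teich_digits v \<pi> (2 * m)" "t * x - k \<in> \<pp> (int (2 * m))"
    using teich_digits_approx by blast
  have "mat2_mult (t, 0, x, inverse t) (mat2_adj (coset_rep \<pi> (Inl (m, k)))) =
      (t * inverse (\<pi> ^ m), 0, (inverse t * inverse (\<pi> ^ m)) * (t * x - k), inverse t * \<pi> ^ m)"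
    using t pi_nonzero by (simp add: field_simps)
  moreover have "(inverse t * inverse (\<pi> ^ m)) * (t * x - k) \<in> \<pp> 0"
    by (rule val_ideal_scale[OF _ k(2)]) (use t m in \<open>simp_all add: val_simps\<close>)
  moreover have "t * inverse (\<pi> ^ m) \<in> \<pp> 0" "inverse t * \<pi> ^ m \<in> \<pp> 0"
    using t m by (simp_all add: val_ideal_iff val_simps)
  moreover have "Inl (m, k) \<in> coset_index v \<pi>" unfolding coset_index_def using k(1) by blast
  ultimately show ?thesis
    using SL2_val_ring_intro[OF det_lower_triangular_mult_adj[OF t(1)]] by (metis zero_in_val_ideal)
qed

lemma lower_triangular_coset_Inr_0:
  assumes t: "t \<noteq> 0" "v t < 0" and x: "x \<in> \<pp> (v t)"
  shows "\<exists>i\<in>coset_index v \<pi>.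
    mat2_mult (t, 0, x, inverse t) (mat2_adj (coset_rep \<pi> i)) \<in> SL2 (val_ring v)"
proof -
  define m where "m = nat (- v t)"
  have m: "int m = - v t" using t m_def by simp
  have "mat2_mult (t, 0, x, inverse t) (mat2_adj (coset_rep \<pi> (Inr (m, 0)))) =
      (0, t * \<pi> ^ m, - (inverse t * inverse (\<pi> ^ m)), \<pi> ^ m * x)"
    using t pi_nonzero by (simp add: field_simps)
  moreover have "\<pi> ^ m * x \<in> \<pp> 0"
    by (rule val_ideal_scale[OF _ x]) (use t m in \<open>simp_all add: val_simps\<close>)
  moreover have "t * \<pi> ^ m \<in> \<pp> 0" "- (inverse t * inverse (\<pi> ^ m)) \<in> \<pp> 0"
    using t m by (simp_all add: val_ideal_iff val_simps)
  moreover have "Inr (m, 0) \<in> coset_index v \<pi>"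
    unfolding coset_index_def using zero_in_teich_digits m t by auto
  ultimately show ?thesis
    using SL2_val_ring_intro[OF det_lower_triangular_mult_adj[OF t(1)]] by (metis zero_in_val_ideal)
qed

text \<open>The digits approximate -1/(\<pi> x t), for which the upper left entry of the quotient
  would vanish.\<close>
lemma lower_triangular_coset_Inr:
  assumes t: "t \<noteq> 0" and x: "x \<noteq> 0" "v x < v t" "v x < - v t"
  shows "\<exists>i\<in>coset_index v \<pi>.
    mat2_mult (t, 0, x, inverse t) (mat2_adj (coset_rep \<pi> i)) \<in> SL2 (val_ring v)"
proof -
  define m where "m = nat (- v x)"
  have m: "int m = - v x" "1 \<le> m" using x m_def by simp_all
  define k0 where "k0 = - inverse (x * \<pi> * t)"
  have "k0 \<in> \<pp> 0" using t x by (simp add: k0_def val_ideal_iff val_simps)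
  then obtain k where k: "k \<in> teich_digits v \<pi> (2 * m - 1)" "k0 - k \<in> \<pp> (int (2 * m - 1))"
    using teich_digits_approx by blast
  define d where "d = k - k0"
  have d: "d \<in> \<pp> (2 * int m - 1)"
    using k(2) val_ideal_diff_commute m(2) by (simp add: d_def of_nat_diff)
  have "mat2_mult (t, 0, x, inverse t) (mat2_adj (coset_rep \<pi> (Inr (m, k)))) =
      (inverse (\<pi> ^ m) * inverse x - (t * inverse (\<pi> ^ m) * \<pi>) * d, t * \<pi> ^ m,
       - ((inverse (\<pi> ^ m) * x * \<pi>) * d), \<pi> ^ m * x)"
    using t x pi_nonzero unfolding d_def k0_def by (simp add: field_simps)
  moreover have "inverse (\<pi> ^ m) * inverse x \<in> \<pp> 0" "t * \<pi> ^ m \<in> \<pp> 0" "\<pi> ^ m * x \<in> \<pp> 0"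
    using t x m by (simp_all add: val_ideal_iff val_simps)
  moreover have "(t * inverse (\<pi> ^ m) * \<pi>) * d \<in> \<pp> 0"
    by (rule val_ideal_scale[OF _ d]) (use t x m in \<open>simp_all add: val_simps\<close>)
  moreover have "(inverse (\<pi> ^ m) * x * \<pi>) * d \<in> \<pp> 0"
    by (rule val_ideal_scale[OF _ d]) (use x m in \<open>simp_all add: val_simps\<close>)
  moreover have "Inr (m, k) \<in> coset_index v \<pi>" unfolding coset_index_def using k(1) m(2) by auto
  ultimately show ?thesis
    using SL2_val_ring_intro[OF det_lower_triangular_mult_adj[OF t]] val_ideal_diff
    by (metis val_ideal_uminus_iff)
qed

lemma lower_triangular_coset:
  assumes t: "t \<noteq> 0"
  shows "\<exists>i\<in>coset_index v \<pi>.
    mat2_mult (t, 0, x, inverse t) (mat2_adj (coset_rep \<pi> i)) \<in> SL2 (val_ring v)"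
proof (cases "0 \<le> v t")
  case True
  then show ?thesis
    using lower_triangular_coset_Inl[OF t True] lower_triangular_coset_Inr[OF t]
    by (cases "x \<in> \<pp> (- v t)") (auto simp: val_ideal_def)
next
  case False
  then show ?thesis
    using lower_triangular_coset_Inr_0[OF t] lower_triangular_coset_Inr[OF t]
    by (cases "x \<in> \<pp> (v t)") (auto simp: val_ideal_def)
qed

lemma coset_rep_exists:
  assumes g: "g \<in> SL2 UNIV"
  shows "\<exists>i\<in>coset_index v \<pi>. \<exists>h\<in>SL2 (val_ring v). g = mat2_mult h (coset_rep \<pi> i)"
proof -
  obtain t x h where t: "t \<noteq> 0" and h: "h \<in> SL2 (val_ring v)"
    and g_eq: "g = mat2_mult h (t, 0, x, inverse t)"
    using lower_triangular_reduction[OF g] by blast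
  obtain i where i: "i \<in> coset_index v \<pi>"
    and h': "mat2_mult (t, 0, x, inverse t) (mat2_adj (coset_rep \<pi> i)) \<in> SL2 (val_ring v)"
    using lower_triangular_coset[OF t] by blast
  have "g = mat2_mult (mat2_mult h (mat2_mult (t, 0, x, inverse t) (mat2_adj (coset_rep \<pi> i))))
      (coset_rep \<pi> i)"
    using g_eq mat2_factor_right[OF det_coset_rep] by (metis mat2_mult_assoc)
  then show ?thesis using i SL2_val_ring_mult[OF h h'] by blast
qed

lemma pi_power_quotient_in_val_ring_imp_le: "\<pi> ^ m * inverse (\<pi> ^ n) \<in> \<pp> 0 \<Longrightarrow> n \<le> m"
  using pi_nonzero by (simp add: val_ideal_iff val_mult)

lemma diagonal_pi_powers_in_SL2_imp_eq:
  assumes "(\<pi> ^ m * inverse (\<pi> ^ n), 0, y, inverse (\<pi> ^ m) * \<pi> ^ n) \<in> SL2 (val_ring v)"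
  shows "m = n"
  using assms pi_power_quotient_in_val_ring_imp_le[of m n] pi_power_quotient_in_val_ring_imp_le[of n m]
  by (simp add: SL2_val_ring_iff mult.commute)

lemma coset_rep_Inl_Inr_not_SL2:
  assumes "k \<in> \<pp> 0" "k' \<in> \<pp> 0" "1 \<le> m'"
  shows "mat2_mult (coset_rep \<pi> (Inl (m, k))) (mat2_adj (coset_rep \<pi> (Inr (m', k'))))
    \<notin> SL2 (val_ring v)"
proof
  assume "mat2_mult (coset_rep \<pi> (Inl (m, k))) (mat2_adj (coset_rep \<pi> (Inr (m', k'))))
    \<in> SL2 (val_ring v)"
  moreover have "mat2_mult (coset_rep \<pi> (Inl (m, k))) (mat2_adj (coset_rep \<pi> (Inr (m', k')))) =
      (- (\<pi> ^ m * inverse (\<pi> ^ m') * \<pi> * k'), \<pi> ^ m * \<pi> ^ m',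
       - (inverse (\<pi> ^ m) * inverse (\<pi> ^ m') * (1 + \<pi> * k * k')), inverse (\<pi> ^ m) * k * \<pi> ^ m')"
    using pi_nonzero by (simp add: field_simps)
  ultimately have c: "inverse (\<pi> ^ m) * inverse (\<pi> ^ m') * (1 + \<pi> * k * k') \<in> \<pp> 0"
    by (simp add: SL2_val_ring_iff)
  have "\<pi> * k * k' \<in> \<pp> 1"
    using val_ideal_mult[OF val_ideal_mult[OF pi_in_max_ideal assms(1)] assms(2)] by simp
  then have "1 + \<pi> * k * k' \<in> \<pp> 0 \<and> 1 + \<pi> * k * k' \<notin> \<pp> 1"
    using val_ideal_diff[of "1 + \<pi> * k * k'" 1 "\<pi> * k * k'"] one_notin_max_ideal
      val_ideal_add[OF one_in_val_ring val_ideal_mono[of 0 1]] by auto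
  then have "1 + \<pi> * k * k' \<noteq> 0" "v (1 + \<pi> * k * k') = 0" using val_ring_unit_iff by blast+
  then show False using c assms(3) pi_nonzero by (simp add: val_ideal_iff val_mult)
qed

lemma coset_rep_Inl_eq:
  assumes k: "k \<in> teich_digits v \<pi> (2 * m)" "k' \<in> teich_digits v \<pi> (2 * m')"
    and in_SL2: "mat2_mult (coset_rep \<pi> (Inl (m, k))) (mat2_adj (coset_rep \<pi> (Inl (m', k'))))
      \<in> SL2 (val_ring v)"
  shows "m = m' \<and> k = k'"
proof -
  have "mat2_mult (coset_rep \<pi> (Inl (m, k))) (mat2_adj (coset_rep \<pi> (Inl (m', k')))) =
    (\<pi> ^ m * inverse (\<pi> ^ m'), 0, inverse (\<pi> ^ m) * inverse (\<pi> ^ m') * (k - k'),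
     inverse (\<pi> ^ m) * \<pi> ^ m')"
    using pi_nonzero by (simp add: field_simps)
  then have "m = m'" and "inverse (\<pi> ^ m) * inverse (\<pi> ^ m') * (k - k') \<in> \<pp> 0"
    using in_SL2 diagonal_pi_powers_in_SL2_imp_eq by (simp_all add: SL2_val_ring_iff)
  then have "k - k' \<in> \<pp> (int (2 * m))"
    using val_ideal_mult_iff[of "inverse (\<pi> ^ m) * inverse (\<pi> ^ m')" "k - k'" 0] pi_nonzero
    by (simp add: val_mult)
  then show ?thesis using teich_digits_congruent_imp_eq k \<open>m = m'\<close> by simp
qed

lemma coset_rep_Inr_eq:
  assumes k: "k \<in> teich_digits v \<pi> (2 * m - 1)" "k' \<in> teich_digits v \<pi> (2 * m' - 1)" and "1 \<le> m"
    and in_SL2: "mat2_mult (coset_rep \<pi> (Inr (m, k))) (mat2_adj (coset_rep \<pi> (Inr (m', k'))))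
      \<in> SL2 (val_ring v)"
  shows "m = m' \<and> k = k'"
proof -
  have "mat2_mult (coset_rep \<pi> (Inr (m, k))) (mat2_adj (coset_rep \<pi> (Inr (m', k')))) =
    (\<pi> ^ m * inverse (\<pi> ^ m'), 0, inverse (\<pi> ^ m) * inverse (\<pi> ^ m') * \<pi> * (k - k'),
     inverse (\<pi> ^ m) * \<pi> ^ m')"
    using pi_nonzero by (simp add: field_simps)
  then have "m = m'" and "inverse (\<pi> ^ m) * inverse (\<pi> ^ m') * \<pi> * (k - k') \<in> \<pp> 0"
    using in_SL2 diagonal_pi_powers_in_SL2_imp_eq by (simp_all add: SL2_val_ring_iff)
  then have "k - k' \<in> \<pp> (int (2 * m - 1))"
    using val_ideal_mult_iff[of "inverse (\<pi> ^ m) * inverse (\<pi> ^ m') * \<pi>" "k - k'" 0]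
      pi_nonzero \<open>1 \<le> m\<close>
    by (simp add: val_mult val_pi of_nat_diff)
  then show ?thesis using teich_digits_congruent_imp_eq k \<open>m = m'\<close> by simp
qed

lemma coset_indexE:
  assumes "i \<in> coset_index v \<pi>"
  obtains (Inl) m k where "i = Inl (m, k)" "k \<in> teich_digits v \<pi> (2 * m)"
    | (Inr) m k where "i = Inr (m, k)" "1 \<le> m" "k \<in> teich_digits v \<pi> (2 * m - 1)"
  using assms unfolding coset_index_def by blast

lemma coset_rep_unique:
  assumes i: "i \<in> coset_index v \<pi>" and j: "j \<in> coset_index v \<pi>"
    and ij: "mat2_mult (coset_rep \<pi> i) (mat2_adj (coset_rep \<pi> j)) \<in> SL2 (val_ring v)"
  shows "i = j"
proof -
  have ji: "mat2_mult (coset_rep \<pi> j) (mat2_adj (coset_rep \<pi> i)) \<in> SL2 (val_ring v)"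
    using SL2_val_ring_mult_adj_sym[OF ij] .
  from i show ?thesis
  proof (cases rule: coset_indexE)
    case (Inl m k)
    note i_eq = this
    from j show ?thesis
    proof (cases rule: coset_indexE)
      case (Inl m' k')
      then show ?thesis using coset_rep_Inl_eq[OF i_eq(2) Inl(2)] ij i_eq(1) by simp
    next
      case (Inr m' k')
      then show ?thesis
        using coset_rep_Inl_Inr_not_SL2 teich_digits_in_val_ring i_eq ij by blast
    qed
  next
    case (Inr m k)
    note i_eq = this
    from j show ?thesis
    proof (cases rule: coset_indexE)
      case (Inl m' k')
      then show ?thesis
        using coset_rep_Inl_Inr_not_SL2 teich_digits_in_val_ring i_eq ji by blast
    next
      case (Inr m' k')
      then show ?thesis using coset_rep_Inr_eq[OF i_eq(3) Inr(3) i_eq(2)] ij i_eq(1) by simp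
    qed
  qed
qed

end

theorem lemma2p3:
  fixes v :: "'a::field_char_0 \<Rightarrow> int" and \<pi> :: 'a
  assumes "p_adic_field v"
    and "uniformizer v \<pi>"
  shows "(\<forall>i\<in>coset_index v \<pi>. coset_rep \<pi> i \<in> SL2 UNIV) \<and>
         (\<forall>g\<in>SL2 UNIV. \<exists>!i. i \<in> coset_index v \<pi> \<and>
              (\<exists>h\<in>SL2 (val_ring v). g = mat2_mult h (coset_rep \<pi> i)))"
proof -
  interpret local_field_uniformizer v \<pi>
    using assms by unfold_locales (auto simp: p_adic_field_def)
  have "\<exists>!i. i \<in> coset_index v \<pi> \<and> (\<exists>h\<in>SL2 (val_ring v). g = mat2_mult h (coset_rep \<pi> i))"
    if g: "g \<in> SL2 UNIV" for g
  proof (rule ex_ex1I)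
    show "\<exists>i. i \<in> coset_index v \<pi> \<and> (\<exists>h\<in>SL2 (val_ring v). g = mat2_mult h (coset_rep \<pi> i))"
      using coset_rep_exists[OF g] by blast
  next
    fix i j
    assume "i \<in> coset_index v \<pi> \<and> (\<exists>h\<in>SL2 (val_ring v). g = mat2_mult h (coset_rep \<pi> i))"
      and "j \<in> coset_index v \<pi> \<and> (\<exists>h\<in>SL2 (val_ring v). g = mat2_mult h (coset_rep \<pi> j))"
    then show "i = j"
      using coset_rep_unique SL2_val_ring_same_right_coset det_coset_rep by metis
  qed
  then show ?thesis by (simp add: SL2_UNIV_iff det_coset_rep)
qed

end
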